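(* Let $\Sigma$ be an arbitrary group and $A$ a difference ring, and let $X=\operatorname{PSpec}A$ with the topology whose closed sets are the sets $V(E)$, $E\subseteq A$. For $s\in A$ let $X_s=X\setminus V(s)$. Then: (1) for all $s,t\in A$, $X_s\cap X_t=\bigcup_{\sigma,\tau\in\Sigma}X_{\sigma(s)\tau(t)}$; (2) $X_s=\emptyset$ if and only if $s$ is nilpotent; (3) $X$ is quasi-compact; (4) the maps $\mathfrak t\mapsto V(\mathfrak t)$ and $Z\mapsto\bigcap_{\mathfrak q\in Z}\mathfrak q$ are mutually inverse bijections between the set of radical difference ideals of $A$ and the set of closed subsets of $X$.
   Context: Let $\Sigma$ be a group. A difference ring is a commutative ring $A$ with identity together with an action of $\Sigma$ on $A$ by ring automorphisms. A difference ideal is an ideal $\mathfrak a$ with $\sigma(\mathfrak a)\subseteq\mathfrak a$ for all $\sigma\in\Sigma$. A difference ideal $\mathfrak q$ is pseudoprime if there is a multiplicatively closed subset $S\subseteq A$ with $1\in S$ such that $\mathfrak q$ is maximal among difference ideals of $A$ not meeting $S$. $\operatorname{PSpec}A$ denotes the set of pseudoprime ideals of $A$, and for $E\subseteq A$, $V(E)$ is the set of pseudoprime ideals containing $E$; these sets are the closed sets of a topology on $\operatorname{PSpec}A$. *)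

theory Defs
  imports Main "HOL-Algebra.Group"
begin

definition ring_automorphism :: "('a::comm_ring_1 \<Rightarrow> 'a) \<Rightarrow> bool" where
  "ring_automorphism f \<longleftrightarrow> bij f \<and> (\<forall>x y. f (x + y) = f x + f y)
     \<and> (\<forall>x y. f (x * y) = f x * f y) \<and> f 1 = 1"

definition difference_ring :: "('g, 'b) monoid_scheme \<Rightarrow> ('g \<Rightarrow> 'a::comm_ring_1 \<Rightarrow> 'a) \<Rightarrow> bool" where
  "difference_ring G act \<longleftrightarrow> group G
     \<and> (\<forall>g\<in>carrier G. ring_automorphism (act g))
     \<and> act \<one>\<^bsub>G\<^esub> = id
     \<and> (\<forall>g\<in>carrier G. \<forall>h\<in>carrier G. act (g \<otimes>\<^bsub>G\<^esub> h) = act g \<circ> act h)"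

definition is_ideal :: "'a::comm_ring_1 set \<Rightarrow> bool" where
  "is_ideal I \<longleftrightarrow> 0 \<in> I \<and> (\<forall>x\<in>I. \<forall>y\<in>I. x + y \<in> I) \<and> (\<forall>r. \<forall>x\<in>I. r * x \<in> I)"

definition difference_ideal :: "('g, 'b) monoid_scheme \<Rightarrow> ('g \<Rightarrow> 'a::comm_ring_1 \<Rightarrow> 'a) \<Rightarrow> 'a set \<Rightarrow> bool" where
  "difference_ideal G act I \<longleftrightarrow> is_ideal I \<and> (\<forall>\<sigma>\<in>carrier G. act \<sigma> ` I \<subseteq> I)"

definition radical_ideal :: "'a::comm_ring_1 set \<Rightarrow> bool" where
  "radical_ideal I \<longleftrightarrow> is_ideal I \<and> (\<forall>x n. x ^ n \<in> I \<longrightarrow> x \<in> I)"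

definition mult_closed :: "'a::comm_ring_1 set \<Rightarrow> bool" where
  "mult_closed S \<longleftrightarrow> 1 \<in> S \<and> (\<forall>x\<in>S. \<forall>y\<in>S. x * y \<in> S)"

definition pseudoprime :: "('g, 'b) monoid_scheme \<Rightarrow> ('g \<Rightarrow> 'a::comm_ring_1 \<Rightarrow> 'a) \<Rightarrow> 'a set \<Rightarrow> bool" where
  "pseudoprime G act q \<longleftrightarrow> (\<exists>S. mult_closed S \<and>
     difference_ideal G act q \<and> q \<inter> S = {} \<and>
     (\<forall>J. difference_ideal G act J \<and> J \<inter> S = {} \<and> q \<subseteq> J \<longrightarrow> J = q))"

definition PSpec :: "('g, 'b) monoid_scheme \<Rightarrow> ('g \<Rightarrow> 'a::comm_ring_1 \<Rightarrow> 'a) \<Rightarrow> 'a set set" where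
  "PSpec G act = {q. pseudoprime G act q}"

definition PV :: "('g, 'b) monoid_scheme \<Rightarrow> ('g \<Rightarrow> 'a::comm_ring_1 \<Rightarrow> 'a) \<Rightarrow> 'a set \<Rightarrow> 'a set set" where
  "PV G act E = {q \<in> PSpec G act. E \<subseteq> q}"

definition PD :: "('g, 'b) monoid_scheme \<Rightarrow> ('g \<Rightarrow> 'a::comm_ring_1 \<Rightarrow> 'a) \<Rightarrow> 'a \<Rightarrow> 'a set set" where
  "PD G act s = PSpec G act - PV G act {s}"

definition pspec_closed :: "('g, 'b) monoid_scheme \<Rightarrow> ('g \<Rightarrow> 'a::comm_ring_1 \<Rightarrow> 'a) \<Rightarrow> 'a set set \<Rightarrow> bool" where
  "pspec_closed G act Z \<longleftrightarrow> (\<exists>E. Z = PV G act E)"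

definition pspec_open :: "('g, 'b) monoid_scheme \<Rightarrow> ('g \<Rightarrow> 'a::comm_ring_1 \<Rightarrow> 'a) \<Rightarrow> 'a set set \<Rightarrow> bool" where
  "pspec_open G act U \<longleftrightarrow> U \<subseteq> PSpec G act \<and> pspec_closed G act (PSpec G act - U)"

definition pspec_quasi_compact :: "('g, 'b) monoid_scheme \<Rightarrow> ('g \<Rightarrow> 'a::comm_ring_1 \<Rightarrow> 'a) \<Rightarrow> bool" where
  "pspec_quasi_compact G act \<longleftrightarrow> (\<forall>\<U>. (\<forall>U\<in>\<U>. pspec_open G act U) \<and> PSpec G act \<subseteq> \<Union>\<U> \<longrightarrow>
      (\<exists>\<F>\<subseteq>\<U>. finite \<F> \<and> PSpec G act \<subseteq> \<Union>\<F>))"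

end

theory Submission
  imports Defs
begin

(*
  The proof rests on three facts about pseudoprime ideals q.
  (a) Existence: if no power of x lies in a difference ideal I, Zorn's lemma yields a
      pseudoprime q containing I with x not in q.
  (b) Radicality: the radical of q is a difference ideal still disjoint from the
      multiplicative set S witnessing pseudoprimality, so by maximality it equals q.
  (c) Quasi-primality: if a, b are not in q then some sigma(a) * tau(b) is not in q.
      This uses the "orbit annihilator" of c, the set of x with sigma(c) * x in q for
      all sigma, which is a difference ideal containing q.
  Part (1) is (c); part (2) is (a) with I = {0} together with (b); part (3) follows
  from (a) with x = 1, which shows V(E) = {} iff 1 lies in the difference ideal
  generated by E, plus the finiteness of that membership; part (4) is (a) and (b)
  applied to radical difference ideals, combined with the Galois connection E |-> V(E).
*)

context
  fixes G :: "('g, 'b) monoid_scheme" and act :: "'g \<Rightarrow> 'a::comm_ring_1 \<Rightarrow> 'a"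
  assumes dr: "difference_ring G act"
begin

lemma act_add: "g \<in> carrier G \<Longrightarrow> act g (x + y) = act g x + act g y"
  and act_mult: "g \<in> carrier G \<Longrightarrow> act g (x * y) = act g x * act g y"
  and act_one: "g \<in> carrier G \<Longrightarrow> act g 1 = 1"
  using dr by (auto simp: difference_ring_def ring_automorphism_def)

lemma act_zero: "g \<in> carrier G \<Longrightarrow> act g 0 = 0"
  using act_add[of g 0 0] by simp

lemma act_pow: "g \<in> carrier G \<Longrightarrow> act g (x ^ n) = act g x ^ n"
  by (induction n) (simp_all add: act_one act_mult)

lemma act_unit: "act \<one>\<^bsub>G\<^esub> x = x"
  and unit_closed: "\<one>\<^bsub>G\<^esub> \<in> carrier G"
  using dr by (auto simp: difference_ring_def group.is_monoid monoid.one_closed)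

text \<open>Any automorphism in the action factors through any other one; this is where
  the existence of inverses in the group is used.\<close>
lemma act_factor:
  assumes "\<rho> \<in> carrier G" "\<sigma> \<in> carrier G"
  shows "\<exists>\<tau>\<in>carrier G. \<forall>x. act \<sigma> x = act \<rho> (act \<tau> x)"
proof -
  interpret group G using dr by (simp add: difference_ring_def)
  let ?\<tau> = "inv\<^bsub>G\<^esub> \<rho> \<otimes>\<^bsub>G\<^esub> \<sigma>"
  have \<tau>: "?\<tau> \<in> carrier G" using assms by simp
  have "\<rho> \<otimes>\<^bsub>G\<^esub> ?\<tau> = \<sigma>" using assms by (simp add: m_assoc[symmetric])
  moreover have "act (\<rho> \<otimes>\<^bsub>G\<^esub> ?\<tau>) = act \<rho> \<circ> act ?\<tau>"
    using dr assms \<tau> unfolding difference_ring_def by blast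
  ultimately have "act \<rho> \<circ> act ?\<tau> = act \<sigma>" by simp
  with \<tau> show ?thesis by (metis comp_apply)
qed

end

section \<open>Difference ideals\<close>

lemma difference_idealI:
  assumes "0 \<in> I" "\<And>x y. x \<in> I \<Longrightarrow> y \<in> I \<Longrightarrow> x + y \<in> I" "\<And>r x. x \<in> I \<Longrightarrow> r * x \<in> I"
    "\<And>\<sigma> x. \<sigma> \<in> carrier G \<Longrightarrow> x \<in> I \<Longrightarrow> act \<sigma> x \<in> I"
  shows "difference_ideal G act I"
  using assms by (auto simp: difference_ideal_def is_ideal_def)

lemma difference_ideal_zero: "difference_ideal G act I \<Longrightarrow> 0 \<in> I"
  and difference_ideal_add: "difference_ideal G act I \<Longrightarrow> x \<in> I \<Longrightarrow> y \<in> I \<Longrightarrow> x + y \<in> I"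
  and difference_ideal_mult: "difference_ideal G act I \<Longrightarrow> x \<in> I \<Longrightarrow> r * x \<in> I"
  by (auto simp: difference_ideal_def is_ideal_def)

lemma difference_ideal_act:
  "difference_ideal G act I \<Longrightarrow> \<sigma> \<in> carrier G \<Longrightarrow> x \<in> I \<Longrightarrow> act \<sigma> x \<in> I"
  unfolding difference_ideal_def by blast

lemma difference_ideal_mult_right: "difference_ideal G act I \<Longrightarrow> x \<in> I \<Longrightarrow> x * r \<in> I"
  by (metis difference_ideal_mult mult.commute)

lemma difference_ideal_sum:
  "difference_ideal G act I \<Longrightarrow> (\<And>k. k \<in> K \<Longrightarrow> f k \<in> I) \<Longrightarrow> sum f K \<in> I"
  by (induction K rule: infinite_finite_induct)
     (auto intro: difference_ideal_zero difference_ideal_add)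

lemma difference_ideal_Inter:
  "(\<And>I. I \<in> \<F> \<Longrightarrow> difference_ideal G act I) \<Longrightarrow> difference_ideal G act (\<Inter>\<F>)"
  by (rule difference_idealI)
     (auto intro: difference_ideal_zero difference_ideal_add difference_ideal_mult
       difference_ideal_act)

lemma difference_ideal_Union_directed:
  assumes ne: "\<F> \<noteq> {}" and ideals: "\<And>I. I \<in> \<F> \<Longrightarrow> difference_ideal G act I"
    and directed: "\<And>I J. I \<in> \<F> \<Longrightarrow> J \<in> \<F> \<Longrightarrow> \<exists>K\<in>\<F>. I \<union> J \<subseteq> K"
  shows "difference_ideal G act (\<Union>\<F>)"
proof (rule difference_idealI)
  obtain I where "I \<in> \<F>" using ne by blast
  then show "0 \<in> \<Union>\<F>" using difference_ideal_zero[OF ideals] by blast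
next
  fix x y assume "x \<in> \<Union>\<F>" "y \<in> \<Union>\<F>"
  then obtain I J where "I \<in> \<F>" "J \<in> \<F>" "x \<in> I" "y \<in> J" by blast
  then obtain K where "K \<in> \<F>" "x \<in> K" "y \<in> K" using directed by blast
  then show "x + y \<in> \<Union>\<F>" using difference_ideal_add[OF ideals] by blast
next
  fix r x assume "x \<in> \<Union>\<F>"
  then show "r * x \<in> \<Union>\<F>" using difference_ideal_mult[OF ideals] by blast
next
  fix \<sigma> x assume "\<sigma> \<in> carrier G" "x \<in> \<Union>\<F>"
  then show "act \<sigma> x \<in> \<Union>\<F>" using difference_ideal_act[OF ideals] by blast
qed

definition difference_span :: "('g, 'b) monoid_scheme \<Rightarrow> ('g \<Rightarrow> 'a::comm_ring_1 \<Rightarrow> 'a)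
    \<Rightarrow> 'a set \<Rightarrow> 'a set" where
  "difference_span G act E = \<Inter>{J. difference_ideal G act J \<and> E \<subseteq> J}"

lemma difference_span_ideal: "difference_ideal G act (difference_span G act E)"
  unfolding difference_span_def by (rule difference_ideal_Inter) blast

lemma difference_span_superset: "E \<subseteq> difference_span G act E"
  unfolding difference_span_def by blast

lemma difference_span_least:
  "difference_ideal G act J \<Longrightarrow> E \<subseteq> J \<Longrightarrow> difference_span G act E \<subseteq> J"
  unfolding difference_span_def by blast

lemma difference_span_mono: "E \<subseteq> F \<Longrightarrow> difference_span G act E \<subseteq> difference_span G act F"
  by (meson difference_span_ideal difference_span_least difference_span_superset order_trans)

text \<open>Membership in a generated difference ideal is witnessed by finitely many
  generators, since the spans of finite subsets form a directed family.\<close>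
lemma difference_span_finite:
  assumes "x \<in> difference_span G act E"
  obtains F where "finite F" "F \<subseteq> E" "x \<in> difference_span G act F"
proof -
  let ?\<F> = "{difference_span G act F | F. finite F \<and> F \<subseteq> E}"
  have "difference_ideal G act (\<Union>?\<F>)"
  proof (rule difference_ideal_Union_directed)
    show "?\<F> \<noteq> {}" by blast
  next
    fix I assume "I \<in> ?\<F>"
    then show "difference_ideal G act I" using difference_span_ideal by blast
  next
    fix I J assume "I \<in> ?\<F>" "J \<in> ?\<F>"
    then obtain F1 F2 where F: "finite F1" "F1 \<subseteq> E" "I = difference_span G act F1"
      "finite F2" "F2 \<subseteq> E" "J = difference_span G act F2" by blast
    then have "difference_span G act (F1 \<union> F2) \<in> ?\<F>" by blast
    moreover have "I \<union> J \<subseteq> difference_span G act (F1 \<union> F2)"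
      using F(3,6) difference_span_mono[of F1 "F1 \<union> F2"] difference_span_mono[of F2 "F1 \<union> F2"]
      by blast
    ultimately show "\<exists>K\<in>?\<F>. I \<union> J \<subseteq> K" by blast
  qed
  moreover have "E \<subseteq> \<Union>?\<F>"
  proof
    fix e assume "e \<in> E"
    then have "difference_span G act {e} \<in> ?\<F>" by blast
    moreover have "e \<in> difference_span G act {e}" using difference_span_superset by blast
    ultimately show "e \<in> \<Union>?\<F>" by blast
  qed
  ultimately have "difference_span G act E \<subseteq> \<Union>?\<F>" by (rule difference_span_least)
  then show ?thesis using assms that by blast
qed

section \<open>Pseudoprime ideals\<close>

lemma pseudoprime_ideal: "pseudoprime G act q \<Longrightarrow> difference_ideal G act q"
  unfolding pseudoprime_def by blast

lemma pseudoprime_proper: "pseudoprime G act q \<Longrightarrow> 1 \<notin> q"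
  unfolding pseudoprime_def mult_closed_def by blast

lemma mult_closed_powers: "mult_closed (range (\<lambda>n. x ^ n))"
  unfolding mult_closed_def by (auto simp flip: power_add) (metis power_0 rangeI)

text \<open>Zorn's lemma: a difference ideal disjoint from a multiplicative set S extends to
  a difference ideal maximal among those disjoint from S, i.e.\ to a pseudoprime.\<close>
lemma pseudoprime_exists:
  assumes I: "difference_ideal G act I" and S: "mult_closed S" and disj: "I \<inter> S = {}"
  shows "\<exists>q. pseudoprime G act q \<and> I \<subseteq> q \<and> q \<inter> S = {}"
proof -
  let ?A = "{J. difference_ideal G act J \<and> J \<inter> S = {} \<and> I \<subseteq> J}"
  have "\<forall>C\<in>chains ?A. \<exists>U\<in>?A. \<forall>X\<in>C. X \<subseteq> U"
  proof
    fix C assume C: "C \<in> chains ?A"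
    show "\<exists>U\<in>?A. \<forall>X\<in>C. X \<subseteq> U"
    proof (cases "C = {}")
      case True
      then show ?thesis using I disj by blast
    next
      case False
      have sub: "C \<subseteq> ?A" using chainsD2[OF C] .
      have "difference_ideal G act (\<Union>C)"
      proof (rule difference_ideal_Union_directed[OF False])
        fix X Y assume "X \<in> C" "Y \<in> C"
        then show "\<exists>K\<in>C. X \<union> Y \<subseteq> K"
          using chainsD[OF C, of X Y] by (metis Un_absorb1 Un_absorb2 order_refl)
      next
        fix X assume "X \<in> C"
        then show "difference_ideal G act X" using sub by blast
      qed
      moreover have "\<Union>C \<inter> S = {}" "I \<subseteq> \<Union>C" using sub False by blast+
      ultimately show ?thesis by blast
    qed
  qed
  from Zorn_Lemma2[OF this]
  obtain q where q: "q \<in> ?A" and max: "\<forall>J\<in>?A. q \<subseteq> J \<longrightarrow> J = q" ..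
  have "pseudoprime G act q"
    unfolding pseudoprime_def
  proof (intro exI conjI allI impI)
    fix J assume "difference_ideal G act J \<and> J \<inter> S = {} \<and> q \<subseteq> J"
    then show "J = q" using q max by blast
  qed (use S q in simp_all)
  with q show ?thesis by blast
qed

lemma pseudoprime_avoiding_powers:
  assumes "difference_ideal G act I" and "\<And>n. x ^ n \<notin> I"
  obtains q where "pseudoprime G act q" "I \<subseteq> q" "x \<notin> q"
proof -
  have "I \<inter> range (\<lambda>n. x ^ n) = {}" using assms(2) by blast
  then obtain q where "pseudoprime G act q" "I \<subseteq> q" "q \<inter> range (\<lambda>n. x ^ n) = {}"
    using pseudoprime_exists[OF assms(1) mult_closed_powers] by blast
  moreover have "x \<in> range (\<lambda>n. x ^ n)" by (metis power_one_right rangeI)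
  ultimately show ?thesis using that by blast
qed

lemma pseudoprime_maximal:
  assumes S: "difference_ideal G act q" "q \<inter> S = {}"
    "\<And>J. difference_ideal G act J \<Longrightarrow> J \<inter> S = {} \<Longrightarrow> q \<subseteq> J \<Longrightarrow> J = q"
    and x: "x \<notin> q"
  obtains s where "s \<in> S" "s \<in> difference_span G act (insert x q)"
proof -
  have "x \<in> difference_span G act (insert x q)" "q \<subseteq> difference_span G act (insert x q)"
    using difference_span_superset[of "insert x q" G act] by auto
  then have "difference_span G act (insert x q) \<inter> S \<noteq> {}"
    using S(3)[OF difference_span_ideal] x by blast
  then show ?thesis using that by blast
qed

text \<open>Binomial expansion: sums of nilpotents modulo I are nilpotent modulo I.\<close>
lemma difference_ideal_power_add:
  assumes I: "difference_ideal G act I" and "x ^ m \<in> I" "y ^ n \<in> I"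
  shows "(x + y) ^ (m + n) \<in> I"
proof -
  have term_in: "of_nat ((m + n) choose k) * x ^ k * y ^ (m + n - k) \<in> I" for k
  proof (cases "m \<le> k")
    case True
    then have "x ^ k = x ^ (k - m) * x ^ m" by (simp flip: power_add)
    then have "of_nat ((m + n) choose k) * x ^ k * y ^ (m + n - k)
        = (of_nat ((m + n) choose k) * x ^ (k - m) * y ^ (m + n - k)) * x ^ m"
      by (simp add: ac_simps)
    then show ?thesis using difference_ideal_mult[OF I \<open>x ^ m \<in> I\<close>] by simp
  next
    case False
    then have "y ^ (m + n - k) = y ^ (m - k) * y ^ n" by (simp flip: power_add)
    then have "of_nat ((m + n) choose k) * x ^ k * y ^ (m + n - k)
        = (of_nat ((m + n) choose k) * x ^ k * y ^ (m - k)) * y ^ n"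
      by (simp add: ac_simps)
    then show ?thesis using difference_ideal_mult[OF I \<open>y ^ n \<in> I\<close>] by simp
  qed
  show ?thesis
    unfolding binomial_ring by (rule difference_ideal_sum[OF I term_in])
qed

lemma difference_ideal_radical:
  assumes dr: "difference_ring G act" and I: "difference_ideal G act I"
  shows "difference_ideal G act {x. \<exists>n. x ^ n \<in> I}"
proof (rule difference_idealI)
  show "0 \<in> {x. \<exists>n. x ^ n \<in> I}"
    using difference_ideal_zero[OF I] by (metis mem_Collect_eq power_one_right)
next
  fix x y assume "x \<in> {x. \<exists>n. x ^ n \<in> I}" "y \<in> {x. \<exists>n. x ^ n \<in> I}"
  then show "x + y \<in> {x. \<exists>n. x ^ n \<in> I}"
    using difference_ideal_power_add[OF I] by blast
next
  fix r x assume "x \<in> {x. \<exists>n. x ^ n \<in> I}"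
  then obtain n where "x ^ n \<in> I" by blast
  then have "(r * x) ^ n \<in> I"
    using difference_ideal_mult[OF I] by (simp add: power_mult_distrib)
  then show "r * x \<in> {x. \<exists>n. x ^ n \<in> I}" by blast
next
  fix \<sigma> x assume \<sigma>: "\<sigma> \<in> carrier G" and "x \<in> {x. \<exists>n. x ^ n \<in> I}"
  then obtain n where "x ^ n \<in> I" by blast
  then have "act \<sigma> x ^ n \<in> I"
    unfolding act_pow[OF dr \<sigma>, symmetric] by (rule difference_ideal_act[OF I \<sigma>])
  then show "act \<sigma> x \<in> {x. \<exists>n. x ^ n \<in> I}" by blast
qed

text \<open>(b): the radical of a pseudoprime q stays disjoint from the witnessing
  multiplicative set, so by maximality it is q itself.\<close>
lemma pseudoprime_radical:
  assumes dr: "difference_ring G act" and q: "pseudoprime G act q" and "x ^ n \<in> q"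
  shows "x \<in> q"
proof -
  obtain S where S: "mult_closed S" "difference_ideal G act q" "q \<inter> S = {}"
    and max: "\<And>J. difference_ideal G act J \<and> J \<inter> S = {} \<and> q \<subseteq> J \<longrightarrow> J = q"
    using q unfolding pseudoprime_def by blast
  let ?r = "{x. \<exists>n. x ^ n \<in> q}"
  have "?r \<inter> S = {}"
  proof -
    have "y ^ k \<in> S" if "y \<in> S" for y k
      using S(1) that by (induction k) (auto simp: mult_closed_def)
    then show ?thesis using S(3) by blast
  qed
  moreover have "q \<subseteq> ?r"
  proof
    fix y assume "y \<in> q"
    then have "y ^ 1 \<in> q" by simp
    then show "y \<in> ?r" by blast
  qed
  ultimately have "?r = q" using max difference_ideal_radical[OF dr S(2)] by blast
  then show ?thesis using \<open>x ^ n \<in> q\<close> by blast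
qed

text \<open>The orbit annihilator of c modulo q: all x with sigma(c) * x in q for every
  sigma. It replaces the ideal quotient (q : c) of the classical prime-ideal argument.\<close>
definition orbit_annihilator :: "('g, 'b) monoid_scheme \<Rightarrow> ('g \<Rightarrow> 'a::comm_ring_1 \<Rightarrow> 'a)
    \<Rightarrow> 'a \<Rightarrow> 'a set \<Rightarrow> 'a set" where
  "orbit_annihilator G act c q = {x. \<forall>\<sigma>\<in>carrier G. act \<sigma> c * x \<in> q}"

text \<open>The orbit annihilator is a difference ideal (closure under the action uses
  that any sigma factors through rho) containing q.\<close>
lemma orbit_annihilator_ideal:
  assumes dr: "difference_ring G act" and q: "difference_ideal G act q"
  shows "difference_ideal G act (orbit_annihilator G act c q)"
  unfolding orbit_annihilator_def
proof (rule difference_idealI)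
  show "0 \<in> {x. \<forall>\<sigma>\<in>carrier G. act \<sigma> c * x \<in> q}"
    using difference_ideal_zero[OF q] by simp
next
  fix x y assume "x \<in> {x. \<forall>\<sigma>\<in>carrier G. act \<sigma> c * x \<in> q}"
    "y \<in> {x. \<forall>\<sigma>\<in>carrier G. act \<sigma> c * x \<in> q}"
  then show "x + y \<in> {x. \<forall>\<sigma>\<in>carrier G. act \<sigma> c * x \<in> q}"
    using difference_ideal_add[OF q] by (simp add: distrib_left)
next
  fix r x assume "x \<in> {x. \<forall>\<sigma>\<in>carrier G. act \<sigma> c * x \<in> q}"
  then show "r * x \<in> {x. \<forall>\<sigma>\<in>carrier G. act \<sigma> c * x \<in> q}"
    using difference_ideal_mult[OF q, of _ r] by (simp add: mult.left_commute)
next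
  fix \<rho> x assume \<rho>: "\<rho> \<in> carrier G" and x: "x \<in> {x. \<forall>\<sigma>\<in>carrier G. act \<sigma> c * x \<in> q}"
  show "act \<rho> x \<in> {x. \<forall>\<sigma>\<in>carrier G. act \<sigma> c * x \<in> q}"
  proof (intro CollectI ballI)
    fix \<sigma> assume \<sigma>: "\<sigma> \<in> carrier G"
    obtain \<tau> where \<tau>: "\<tau> \<in> carrier G" "act \<sigma> c = act \<rho> (act \<tau> c)"
      using act_factor[OF dr \<rho> \<sigma>] by blast
    then have "act \<sigma> c * act \<rho> x = act \<rho> (act \<tau> c * x)"
      by (simp add: act_mult[OF dr \<rho>])
    then show "act \<sigma> c * act \<rho> x \<in> q"
      using difference_ideal_act[OF q \<rho>] x \<tau>(1) by simp
  qed
qed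

lemma orbit_annihilator_superset:
  "difference_ideal G act q \<Longrightarrow> q \<subseteq> orbit_annihilator G act c q"
  unfolding orbit_annihilator_def using difference_ideal_mult by blast

lemma difference_span_insert_annihilator:
  assumes dr: "difference_ring G act" and q: "difference_ideal G act q"
    and x: "x \<in> orbit_annihilator G act c q"
  shows "difference_span G act (insert x q) \<subseteq> orbit_annihilator G act c q"
  using difference_span_least[OF orbit_annihilator_ideal[OF dr q]]
    orbit_annihilator_superset[OF q] x by blast

lemma orbit_annihilator_sym:
  assumes dr: "difference_ring G act" and q: "difference_ideal G act q"
    and x: "x \<in> orbit_annihilator G act c q"
  shows "c \<in> orbit_annihilator G act x q"
  unfolding orbit_annihilator_def
proof (intro CollectI ballI)
  fix \<tau> assume \<tau>: "\<tau> \<in> carrier G"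
  have "act \<tau> x \<in> orbit_annihilator G act c q"
    using difference_ideal_act[OF orbit_annihilator_ideal[OF dr q] \<tau> x] .
  then have "act \<one>\<^bsub>G\<^esub> c * act \<tau> x \<in> q"
    using unit_closed[OF dr] unfolding orbit_annihilator_def by blast
  then show "act \<tau> x * c \<in> q" by (simp add: act_unit[OF dr] mult.commute)
qed

text \<open>If all sigma(a) * tau(b)
  lay in q, the elements s1, s2 of S generated by adjoining a resp.\ b to q would satisfy
  s1 * s2 in q, by two applications of the annihilator argument.\<close>
lemma pseudoprime_quasi_prime:
  assumes dr: "difference_ring G act" and pq: "pseudoprime G act q"
    and a: "a \<notin> q" and b: "b \<notin> q"
  shows "\<exists>\<sigma>\<in>carrier G. \<exists>\<tau>\<in>carrier G. act \<sigma> a * act \<tau> b \<notin> q"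
proof (rule ccontr)
  assume "\<not> ?thesis"
  then have prod: "act \<one>\<^bsub>G\<^esub> a * act \<tau> b \<in> q" if "\<tau> \<in> carrier G" for \<tau>
    using that unit_closed[OF dr] by blast
  obtain S where S: "mult_closed S" "difference_ideal G act q" "q \<inter> S = {}"
    and max: "\<And>J. difference_ideal G act J \<Longrightarrow> J \<inter> S = {} \<Longrightarrow> q \<subseteq> J \<Longrightarrow> J = q"
    using pq unfolding pseudoprime_def by blast
  obtain s1 where s1: "s1 \<in> S" "s1 \<in> difference_span G act (insert a q)"
    using pseudoprime_maximal[OF S(2,3) max a] by blast
  obtain s2 where s2: "s2 \<in> S" "s2 \<in> difference_span G act (insert b q)"
    using pseudoprime_maximal[OF S(2,3) max b] by blast
  have "a \<in> orbit_annihilator G act b q"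
    using prod by (simp add: orbit_annihilator_def act_unit[OF dr] mult.commute)
  then have "s1 \<in> orbit_annihilator G act b q"
    using difference_span_insert_annihilator[OF dr S(2)] s1(2) by blast
  then have "b \<in> orbit_annihilator G act s1 q"
    by (rule orbit_annihilator_sym[OF dr S(2)])
  then have "s2 \<in> orbit_annihilator G act s1 q"
    using difference_span_insert_annihilator[OF dr S(2)] s2(2) by blast
  then have "act \<one>\<^bsub>G\<^esub> s1 * s2 \<in> q"
    using unit_closed[OF dr] unfolding orbit_annihilator_def by blast
  moreover have "s1 * s2 \<in> S" using S(1) s1(1) s2(1) by (simp add: mult_closed_def)
  ultimately show False using S(3) by (simp add: act_unit[OF dr]) blast
qed

section \<open>The pseudospectrum\<close>

lemma PV_iff: "q \<in> PV G act E \<longleftrightarrow> pseudoprime G act q \<and> E \<subseteq> q"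
  by (auto simp: PV_def PSpec_def)

lemma PD_iff: "q \<in> PD G act s \<longleftrightarrow> pseudoprime G act q \<and> s \<notin> q"
  by (auto simp: PD_def PV_iff PSpec_def)

text \<open>Part (1): one inclusion is (c), the other holds as q is a difference ideal.\<close>
lemma PD_Int:
  assumes dr: "difference_ring G act"
  shows "PD G act s \<inter> PD G act t
     = (\<Union>\<sigma>\<in>carrier G. \<Union>\<tau>\<in>carrier G. PD G act (act \<sigma> s * act \<tau> t))"
proof (intro equalityI subsetI)
  fix q assume "q \<in> PD G act s \<inter> PD G act t"
  then have q: "pseudoprime G act q" "s \<notin> q" "t \<notin> q" by (auto simp: PD_iff)
  then show "q \<in> (\<Union>\<sigma>\<in>carrier G. \<Union>\<tau>\<in>carrier G. PD G act (act \<sigma> s * act \<tau> t))"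
    using pseudoprime_quasi_prime[OF dr q] by (auto simp: PD_iff)
next
  fix q assume "q \<in> (\<Union>\<sigma>\<in>carrier G. \<Union>\<tau>\<in>carrier G. PD G act (act \<sigma> s * act \<tau> t))"
  then obtain \<sigma> \<tau> where \<sigma>\<tau>: "\<sigma> \<in> carrier G" "\<tau> \<in> carrier G"
    and q: "pseudoprime G act q" "act \<sigma> s * act \<tau> t \<notin> q" by (auto simp: PD_iff)
  note I = pseudoprime_ideal[OF q(1)]
  have "s \<notin> q"
    using q(2) difference_ideal_mult_right[OF I difference_ideal_act[OF I \<sigma>\<tau>(1)]] by blast
  moreover have "t \<notin> q"
    using q(2) difference_ideal_mult[OF I difference_ideal_act[OF I \<sigma>\<tau>(2)]] by blast
  ultimately show "q \<in> PD G act s \<inter> PD G act t" using q(1) by (simp add: PD_iff)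
qed

text \<open>Part (2): the nilradical is the intersection of all pseudoprimes.\<close>
lemma PD_empty_iff_nilpotent:
  assumes dr: "difference_ring G act"
  shows "PD G act s = {} \<longleftrightarrow> (\<exists>n. s ^ n = 0)"
proof
  assume empty: "PD G act s = {}"
  show "\<exists>n. s ^ n = 0"
  proof (rule ccontr)
    assume "\<not> (\<exists>n. s ^ n = 0)"
    moreover have "difference_ideal G act {0}"
      by (rule difference_idealI) (simp_all add: act_zero[OF dr])
    ultimately obtain q where "pseudoprime G act q" "s \<notin> q"
      using pseudoprime_avoiding_powers[of G act "{0}" s] by blast
    then have "q \<in> PD G act s" by (simp add: PD_iff)
    then show False using empty by blast
  qed
next
  assume "\<exists>n. s ^ n = 0"
  then obtain n where "s ^ n = 0" ..
  have "s \<in> q" if "pseudoprime G act q" for q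
    using pseudoprime_radical[OF dr that] difference_ideal_zero[OF pseudoprime_ideal[OF that]]
      \<open>s ^ n = 0\<close> by metis
  then show "PD G act s = {}" by (auto simp: PD_iff)
qed

lemma PV_empty_iff:
  "PV G act E = {} \<longleftrightarrow> 1 \<in> difference_span G act E"
proof
  assume empty: "PV G act E = {}"
  show "1 \<in> difference_span G act E"
  proof (rule ccontr)
    assume "1 \<notin> difference_span G act E"
    then have "\<And>n. 1 ^ n \<notin> difference_span G act E" by simp
    then obtain q where "pseudoprime G act q" "difference_span G act E \<subseteq> q"
      by (rule pseudoprime_avoiding_powers[OF difference_span_ideal])
    then have "q \<in> PV G act E"
      using difference_span_superset[of E G act] by (auto simp: PV_iff)
    with empty show False by blast
  qed
next
  assume one: "1 \<in> difference_span G act E"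
  show "PV G act E = {}"
  proof (rule equals0I)
    fix q assume "q \<in> PV G act E"
    then have q: "pseudoprime G act q" and "E \<subseteq> q" by (simp_all add: PV_iff)
    then have "1 \<in> q" using one difference_span_least[OF pseudoprime_ideal[OF q]] by blast
    with pseudoprime_proper[OF q] show False by contradiction
  qed
qed

text \<open>Complements of the open sets U of a cover are V(E U) with
  V(\<Union> E U) = {}; by the weak Nullstellensatz 1 is generated by finitely many
  elements of \<Union> E U, which lie in finitely many E U.\<close>
lemma PSpec_quasi_compact: "pspec_quasi_compact G act"
  unfolding pspec_quasi_compact_def
proof (intro allI impI)
  fix \<U> assume "(\<forall>U\<in>\<U>. pspec_open G act U) \<and> PSpec G act \<subseteq> \<Union>\<U>"
  then have opens: "\<forall>U\<in>\<U>. \<exists>E. PSpec G act - U = PV G act E"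
    and cover: "PSpec G act \<subseteq> \<Union>\<U>"
    unfolding pspec_open_def pspec_closed_def by blast+
  obtain E where E: "\<And>U. U \<in> \<U> \<Longrightarrow> PSpec G act - U = PV G act (E U)"
    using bchoice[OF opens] by blast
  have outside: "E U \<subseteq> q \<longleftrightarrow> q \<notin> U" if "U \<in> \<U>" "q \<in> PSpec G act" for U q
    using E[OF that(1)] that(2) unfolding PV_def set_eq_iff by blast
  have covered: "PSpec G act \<subseteq> \<Union>\<V> \<longleftrightarrow> PV G act (\<Union>(E ` \<V>)) = {}" if "\<V> \<subseteq> \<U>" for \<V>
  proof -
    have "q \<in> PV G act (\<Union>(E ` \<V>)) \<longleftrightarrow> q \<in> PSpec G act \<and> q \<notin> \<Union>\<V>" for q
      using outside that unfolding PV_def by blast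
    then show ?thesis by blast
  qed
  have "1 \<in> difference_span G act (\<Union>(E ` \<U>))"
    using covered[of \<U>] cover PV_empty_iff by blast
  then obtain F where F: "finite F" "F \<subseteq> \<Union>(E ` \<U>)" "1 \<in> difference_span G act F"
    by (rule difference_span_finite)
  obtain \<B> where \<B>: "finite \<B>" "\<B> \<subseteq> E ` \<U>" "F \<subseteq> \<Union>\<B>"
    using finite_subset_Union[OF F(1,2)] .
  obtain \<F> where \<F>: "\<F> \<subseteq> \<U>" "finite \<F>" "\<B> = E ` \<F>"
    using finite_subset_image[OF \<B>(1,2)] by blast
  have "1 \<in> difference_span G act (\<Union>(E ` \<F>))"
    using F(3) \<B>(3) \<F>(3) difference_span_mono by blast
  then have "PSpec G act \<subseteq> \<Union>\<F>"
    using covered[OF \<F>(1)] PV_empty_iff by blast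
  with \<F> show "\<exists>\<F>\<subseteq>\<U>. finite \<F> \<and> PSpec G act \<subseteq> \<Union>\<F>" by blast
qed

lemma Inter_pseudoprimes:
  assumes dr: "difference_ring G act" and Z: "\<And>q. q \<in> Z \<Longrightarrow> pseudoprime G act q"
  shows "radical_ideal (\<Inter>Z) \<and> difference_ideal G act (\<Inter>Z)"
proof -
  have "difference_ideal G act (\<Inter>Z)"
    using difference_ideal_Inter pseudoprime_ideal Z by metis
  moreover have "x \<in> \<Inter>Z" if "x ^ n \<in> \<Inter>Z" for x n
    using that pseudoprime_radical[OF dr Z] by blast
  ultimately show ?thesis
    unfolding radical_ideal_def difference_ideal_def by blast
qed

lemma Inter_PV_radical:
  assumes "radical_ideal t" "difference_ideal G act t"
  shows "\<Inter>(PV G act t) = t"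
proof (intro equalityI subsetI)
  fix x assume x: "x \<in> \<Inter>(PV G act t)"
  show "x \<in> t"
  proof (rule ccontr)
    assume "x \<notin> t"
    then have "\<And>n. x ^ n \<notin> t" using assms(1) unfolding radical_ideal_def by blast
    then obtain q where "pseudoprime G act q" "t \<subseteq> q" "x \<notin> q"
      using pseudoprime_avoiding_powers[OF assms(2)] by blast
    then show False using x by (auto simp: PV_iff)
  qed
qed (auto simp: PV_iff)

lemma PV_Inter_closed:
  assumes "pspec_closed G act Z"
  shows "PV G act (\<Inter>Z) = Z"
proof -
  obtain E where Z: "Z = PV G act E" using assms unfolding pspec_closed_def by blast
  then have "E \<subseteq> \<Inter>Z" by (auto simp: PV_iff)
  show ?thesis
  proof (intro equalityI subsetI)
    fix q assume "q \<in> PV G act (\<Inter>Z)"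
    then have "pseudoprime G act q" "E \<subseteq> q" using \<open>E \<subseteq> \<Inter>Z\<close> by (auto simp: PV_iff)
    then show "q \<in> Z" unfolding Z by (simp add: PV_iff)
  next
    fix q assume "q \<in> Z"
    then show "q \<in> PV G act (\<Inter>Z)" using Z by (auto simp: PV_iff)
  qed
qed

theorem proposition3p3:
  fixes G :: "('g, 'b) monoid_scheme" and act :: "'g \<Rightarrow> 'a::comm_ring_1 \<Rightarrow> 'a"
  assumes "difference_ring G act"
  shows "(\<forall>s t. PD G act s \<inter> PD G act t
            = (\<Union>\<sigma>\<in>carrier G. \<Union>\<tau>\<in>carrier G. PD G act (act \<sigma> s * act \<tau> t)))
       \<and> (\<forall>s. PD G act s = {} \<longleftrightarrow> (\<exists>n. s ^ n = 0))
       \<and> pspec_quasi_compact G act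
       \<and> bij_betw (PV G act) {t. radical_ideal t \<and> difference_ideal G act t}
                              {Z. pspec_closed G act Z}
       \<and> (\<forall>t. radical_ideal t \<and> difference_ideal G act t \<longrightarrow> \<Inter>(PV G act t) = t)
       \<and> (\<forall>Z. pspec_closed G act Z \<longrightarrow> PV G act (\<Inter>Z) = Z
              \<and> radical_ideal (\<Inter>Z) \<and> difference_ideal G act (\<Inter>Z))"
proof -
  have ideal_to_closed: "\<forall>t. radical_ideal t \<and> difference_ideal G act t \<longrightarrow> \<Inter>(PV G act t) = t"
    using Inter_PV_radical by blast
  have closed_to_ideal: "\<forall>Z. pspec_closed G act Z \<longrightarrow> PV G act (\<Inter>Z) = Z
              \<and> radical_ideal (\<Inter>Z) \<and> difference_ideal G act (\<Inter>Z)"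
    using PV_Inter_closed Inter_pseudoprimes[OF assms]
    by (metis PV_iff pspec_closed_def)
  have "bij_betw (PV G act) {t. radical_ideal t \<and> difference_ideal G act t}
                              {Z. pspec_closed G act Z}"
    by (rule bij_betw_byWitness[where f' = Inter])
       (use ideal_to_closed closed_to_ideal in \<open>auto simp: pspec_closed_def\<close>)
  then show ?thesis
    using PD_Int[OF assms] PD_empty_iff_nilpotent[OF assms] PSpec_quasi_compact
      ideal_to_closed closed_to_ideal by blast
qed

end
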